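(* For any worlds $(X,A),(Y,B)$ of the canonical model for $\mathbb{PCL}$, $S_X(Y,B)\subseteq U(X,A)$.
   Context: Formulas $\mathcal{L}::=p\mid\bot\mid A\wedge B\mid A\lor B\mid A\to B\mid A>B$, $\neg G:=G\to\bot$; maximal consistent sets relative to the axiom system of $\mathbb{PCL}$ (classical propositional logic, rules (RCEA) from $A\leftrightarrow B$ infer $(A>C)\leftrightarrow(B>C)$, (RCK) from $A\to B$ infer $(C>A)\to(C>B)$, axioms (ID) $A>A$, (R-And) $(A>B)\wedge(A>C)\to(A>(B\wedge C))$, (CM) $(A>B)\wedge(A>C)\to((A\wedge B)>C)$, (OR) $(A>C)\wedge(B>C)\to((A\lor B)>C)$). For maximal consistent $X$: $X^B=\{C\mid B>C\in X\}$, $A\le_X B$ iff $(A\lor B)>A\in X$. $\mathcal{W}=\{(X,A)\mid X$ maximal consistent, $A\in X\}$. $S_X(Y,B)=\{(Z,C)\in\mathcal{W}\mid X^C\subseteq Z,\ C\le_X B,\ B\notin Z\}\cup\{(Y,B)\}$. The universe of $(X,A)$ is $U(X,A)=\{(Y,B)\in\mathcal{W}\mid$ for all formulas $G$, $G>\bot\in X$ implies $\neg G\in Y\}$.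
   Formalization: The world (Y,B) ranges only over U(X,A), rather than over all of $\mathcal{W}$, while (X,A) is any world. The statement above fails without it. *)

theory Defs
  imports Main
begin

datatype 'a form =
    Atom 'a
  | Bot
  | And "'a form" "'a form"
  | Or "'a form" "'a form"
  | Imp "'a form" "'a form"
  | Cond "'a form" "'a form"

definition Neg :: "'a form \<Rightarrow> 'a form" where
  "Neg G = Imp G Bot"

definition Iff :: "'a form \<Rightarrow> 'a form \<Rightarrow> 'a form" where
  "Iff A B = And (Imp A B) (Imp B A)"

text \<open>Classical propositional evaluation: conditional formulas A > B are treated
  as propositional atoms (valuation v on them), so tautologies are exactly the
  substitution instances of classical propositional tautologies.\<close>
fun peval :: "('a form \<Rightarrow> bool) \<Rightarrow> 'a form \<Rightarrow> bool" where
  "peval v (Atom p) = v (Atom p)"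
| "peval v Bot = False"
| "peval v (And A B) = (peval v A \<and> peval v B)"
| "peval v (Or A B) = (peval v A \<or> peval v B)"
| "peval v (Imp A B) = (peval v A \<longrightarrow> peval v B)"
| "peval v (Cond A B) = v (Cond A B)"

definition tautology :: "'a form \<Rightarrow> bool" where
  "tautology A = (\<forall>v. peval v A)"

inductive pcl_thm :: "'a form \<Rightarrow> bool" where
  Taut: "tautology A \<Longrightarrow> pcl_thm A"
| MP: "pcl_thm (Imp A B) \<Longrightarrow> pcl_thm A \<Longrightarrow> pcl_thm B"
| RCEA: "pcl_thm (Iff A B) \<Longrightarrow> pcl_thm (Iff (Cond A C) (Cond B C))"
| RCK: "pcl_thm (Imp A B) \<Longrightarrow> pcl_thm (Imp (Cond C A) (Cond C B))"
| ID: "pcl_thm (Cond A A)"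
| RAnd: "pcl_thm (Imp (And (Cond A B) (Cond A C)) (Cond A (And B C)))"
| CM: "pcl_thm (Imp (And (Cond A B) (Cond A C)) (Cond (And A B) C))"
| OR: "pcl_thm (Imp (And (Cond A C) (Cond B C)) (Cond (Or A B) C))"

fun imps :: "'a form list \<Rightarrow> 'a form \<Rightarrow> 'a form" where
  "imps [] A = A"
| "imps (G # Gs) A = Imp G (imps Gs A)"

definition derives :: "'a form set \<Rightarrow> 'a form \<Rightarrow> bool" where
  "derives X A = (\<exists>Gs. set Gs \<subseteq> X \<and> pcl_thm (imps Gs A))"

definition consistent :: "'a form set \<Rightarrow> bool" where
  "consistent X = (\<not> derives X Bot)"

definition max_consistent :: "'a form set \<Rightarrow> bool" where
  "max_consistent X = (consistent X \<and> (\<forall>A. A \<notin> X \<longrightarrow> \<not> consistent (insert A X)))"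

definition cond_set :: "'a form set \<Rightarrow> 'a form \<Rightarrow> 'a form set" where
  "cond_set X B = {C. Cond B C \<in> X}"

definition le_X :: "'a form set \<Rightarrow> 'a form \<Rightarrow> 'a form \<Rightarrow> bool" where
  "le_X X A B = (Cond (Or A B) A \<in> X)"

definition worlds :: "('a form set \<times> 'a form) set" where
  "worlds = {(X, A). max_consistent X \<and> A \<in> X}"

definition sphere :: "'a form set \<Rightarrow> 'a form set \<Rightarrow> 'a form \<Rightarrow> ('a form set \<times> 'a form) set" where
  "sphere X Y B = {(Z, C) \<in> worlds. cond_set X C \<subseteq> Z \<and> le_X X C B \<and> B \<notin> Z} \<union> {(Y, B)}"

definition universe :: "'a form set \<Rightarrow> 'a form \<Rightarrow> ('a form set \<times> 'a form) set" where
  "universe X A = {(Y, B) \<in> worlds. \<forall>G. Cond G Bot \<in> X \<longrightarrow> Neg G \<in> Y}"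

end

theory Submission
  imports Defs
begin

text \<open>If \<open>G > \<bottom>\<close> lies in the maximal consistent set \<open>X\<close>, then so does \<open>C > \<not>G\<close> for every
  antecedent \<open>C\<close>: cautious monotonicity turns \<open>G > \<bottom>\<close> into \<open>(G \<and> C) > \<not>G\<close>, identity gives
  \<open>(C \<and> \<not>G) > \<not>G\<close>, and (OR) together with (RCEA) glues the two halves of \<open>C\<close> back together.
  Hence every world \<open>(Z, C)\<close> with \<open>X\<^sup>C \<subseteq> Z\<close> contains \<open>\<not>G\<close>.\<close>

lemma peval_imps: "peval v (imps Gs A) = ((\<forall>G\<in>set Gs. peval v G) \<longrightarrow> peval v A)"
  by (induction Gs) auto

lemma pcl_thm_Imp_of_Iff: "pcl_thm (Iff A B) \<Longrightarrow> pcl_thm (Imp A B)"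
  by (rule MP[OF Taut]) (auto simp: tautology_def Iff_def)

lemma max_consistent_derives_mem:
  assumes mc: "max_consistent X" and der: "derives X A"
  shows "A \<in> X"
proof (rule ccontr)
  obtain Gs where Gs: "set Gs \<subseteq> X" "pcl_thm (imps Gs A)"
    using der unfolding derives_def by blast
  assume "A \<notin> X"
  with mc have "\<not> consistent (insert A X)" unfolding max_consistent_def by blast
  then obtain Hs where Hs: "set Hs \<subseteq> insert A X" "pcl_thm (imps Hs Bot)"
    unfolding consistent_def derives_def by blast
  let ?Ks = "Gs @ filter (\<lambda>H. H \<noteq> A) Hs"
  have "tautology (Imp (imps Hs Bot) (Imp (imps Gs A) (imps ?Ks Bot)))"
    unfolding tautology_def by (auto simp: peval_imps)
  then have "pcl_thm (imps ?Ks Bot)"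
    using Gs(2) Hs(2) by (meson pcl_thm.MP pcl_thm.Taut)
  moreover have "set ?Ks \<subseteq> X" using Gs(1) Hs(1) by auto
  ultimately have "derives X Bot" unfolding derives_def by blast
  with mc show False unfolding max_consistent_def consistent_def by blast
qed

lemma max_consistent_thm_mem: "max_consistent X \<Longrightarrow> pcl_thm A \<Longrightarrow> A \<in> X"
  by (rule max_consistent_derives_mem) (auto simp: derives_def intro: exI[of _ "[]"])

lemma max_consistent_mp:
  "max_consistent X \<Longrightarrow> A \<in> X \<Longrightarrow> pcl_thm (Imp A B) \<Longrightarrow> B \<in> X"
  by (rule max_consistent_derives_mem) (auto simp: derives_def intro: exI[of _ "[A]"])

lemma max_consistent_mp2:
  assumes "max_consistent X" "A \<in> X" "B \<in> X" "pcl_thm (Imp (And A B) C)"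
  shows "C \<in> X"
proof -
  have "tautology (Imp (Imp (And A B) C) (imps [A, B] C))" unfolding tautology_def by auto
  then have "pcl_thm (imps [A, B] C)" using assms(4) by (meson pcl_thm.MP pcl_thm.Taut)
  then show ?thesis
    using assms(1-3) by (intro max_consistent_derives_mem) (auto simp: derives_def intro: exI[of _ "[A, B]"])
qed

lemma max_consistent_Cond_mono:
  "max_consistent X \<Longrightarrow> Cond C A \<in> X \<Longrightarrow> pcl_thm (Imp A B) \<Longrightarrow> Cond C B \<in> X"
  by (meson max_consistent_mp pcl_thm.RCK)

lemma max_consistent_Cond_cong:
  "max_consistent X \<Longrightarrow> Cond A C \<in> X \<Longrightarrow> pcl_thm (Iff A B) \<Longrightarrow> Cond B C \<in> X"
  by (meson max_consistent_mp pcl_thm.RCEA pcl_thm_Imp_of_Iff)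

lemma pcl_thm_Bot_imp: "pcl_thm (Imp Bot A)"
  by (rule Taut) (simp add: tautology_def)

lemma max_consistent_Cond_Neg_of_Cond_Bot:
  assumes mc: "max_consistent X" and G: "Cond G Bot \<in> X"
  shows "Cond C (Neg G) \<in> X"
proof -
  have "Cond G C \<in> X" using max_consistent_Cond_mono[OF mc G pcl_thm_Bot_imp] .
  then have "Cond (And G C) Bot \<in> X" using max_consistent_mp2[OF mc _ G CM] by blast
  then have GC: "Cond (And G C) (Neg G) \<in> X"
    using max_consistent_Cond_mono[OF mc _ pcl_thm_Bot_imp] by blast
  have "Cond (And C (Neg G)) (And C (Neg G)) \<in> X" using max_consistent_thm_mem[OF mc ID] .
  moreover have "pcl_thm (Imp (And C (Neg G)) (Neg G))" by (rule Taut) (simp add: tautology_def)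
  ultimately have CnG: "Cond (And C (Neg G)) (Neg G) \<in> X"
    using max_consistent_Cond_mono[OF mc] by blast
  have "Cond (Or (And C (Neg G)) (And G C)) (Neg G) \<in> X"
    using max_consistent_mp2[OF mc CnG GC OR] .
  moreover have "pcl_thm (Iff (Or (And C (Neg G)) (And G C)) C)"
    by (rule Taut) (auto simp add: tautology_def Iff_def Neg_def)
  ultimately show ?thesis using max_consistent_Cond_cong[OF mc] by blast
qed

lemma universe_if_cond_set_subset:
  assumes "max_consistent X" "(Z, C) \<in> worlds" "cond_set X C \<subseteq> Z"
  shows "(Z, C) \<in> universe X A"
  using assms max_consistent_Cond_Neg_of_Cond_Bot[OF assms(1), of _ C]
  by (auto simp: universe_def cond_set_def)

theorem mainTheorem8:
  assumes "(X, A) \<in> worlds"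
    and "(Y, B) \<in> universe X A"
  shows "sphere X Y B \<subseteq> universe X A"
proof -
  have "max_consistent X" using assms(1) by (simp add: worlds_def)
  then have "(Z, C) \<in> universe X A"
    if "(Z, C) \<in> worlds" "cond_set X C \<subseteq> Z" for Z C
    using universe_if_cond_set_subset that by blast
  then show ?thesis using assms(2) unfolding sphere_def by auto
qed

end
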